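(* For every integer $s$, the polynomial $F_s(t)= t^4 + (4s^3 - 4s^2 + 8s - 4)t^3 + (-6s^2 - 6)t^2 + 4t + 1$ is irreducible in $\mathbb{Q}[t]$. *)

theory Defs
  imports "HOL-Computational_Algebra.Polynomial_Factorial"
begin

definition F :: "int \<Rightarrow> rat poly" where
  "F s = [: 1, 4, - 6 * of_int s ^ 2 - 6,
            4 * of_int s ^ 3 - 4 * of_int s ^ 2 + 8 * of_int s - 4, 1 :]"

end

theory Submission
  imports Defs "Berlekamp_Zassenhaus.Factor_Bound"
begin

text \<open>By Gauss's lemma it suffices to rule out a factorisation over \<open>\<int>\<close> of the monic
  quartic with constant coefficient 1. A linear factor would give a root \<open>\<plusminus>1\<close>, but
  \<open>F\<^sub>s(-1) = -2(2s+1)(s\<^sup>2+2)\<close> never vanishes and \<open>F\<^sub>s(1) = 0\<close> would force \<open>s dvd 2\<close>.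
  Two quadratic factors share their constant coefficient \<open>e = \<plusminus>1\<close> and their leading
  coefficient \<open>f = \<plusminus>1\<close>; comparing the coefficients of \<open>t\<close> and \<open>t\<^sup>3\<close> forces
  \<open>4s\<^sup>3 - 4s\<^sup>2 + 8s - 4 = \<plusminus>4\<close>, i.e. \<open>s \<in> {0, 1}\<close>, and then the middle coefficients
  \<open>a, b\<close> of the factors would satisfy \<open>(a - b)\<^sup>2 \<in> {32, 72}\<close>, which are not squares.\<close>

lemma degree_factors_of_quartic:
  fixes g h :: "'a::idom poly"
  assumes "degree (g * h) = 4" "0 < degree g" "0 < degree h"
  shows "degree g = 1 \<or> degree h = 1 \<or> degree g = 2 \<and> degree h = 2"
proof -
  have "g \<noteq> 0" "h \<noteq> 0" using assms(2,3) by auto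
  then have "degree g + degree h = 4" using assms(1) by (simp add: degree_mult_eq)
  then show ?thesis using assms(2,3) by linarith
qed

lemma linear_factor_imp_root_plus_minus_one:
  fixes p g h :: "int poly"
  assumes "p = g * h" "degree g = 1" "lead_coeff p = 1" "Polynomial.coeff p 0 = 1"
  shows "poly p 1 = 0 \<or> poly p (-1) = 0"
proof -
  obtain a b where g: "g = [:b, a:]" and "a \<noteq> 0" using degree1_coeffs[OF assms(2)] .
  have "lead_coeff g * lead_coeff h = 1" using assms(1,3) by (simp add: lead_coeff_mult)
  then have "a * lead_coeff h = 1" using \<open>a \<noteq> 0\<close> by (simp add: g)
  then have a: "a = 1 \<or> a = -1" by (auto simp: zmult_eq_1_iff)
  have "b * Polynomial.coeff h 0 = 1" using assms(1,4) by (simp add: coeff_mult_0 g)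
  then have b: "b = 1 \<or> b = -1" by (auto simp: zmult_eq_1_iff)
  have "poly g (- a * b) = 0" using a b by (auto simp: g)
  then have "poly p (- a * b) = 0" using assms(1) by simp
  then show ?thesis using a b by auto
qed

lemma reciprocal_quartic_quadratic_factors:
  fixes c\<^sub>1 c\<^sub>2 c\<^sub>3 :: int and g h :: "int poly"
  assumes "[:1, c\<^sub>1, c\<^sub>2, c\<^sub>3, 1:] = g * h" "degree g = 2" "degree h = 2"
  obtains e f a b where "e \<in> {1, -1}" "f \<in> {1, -1}"
    "a + b = e * c\<^sub>1" "c\<^sub>3 = e * f * c\<^sub>1" "a * b = c\<^sub>2 - 2 * e * f"
proof -
  obtain a\<^sub>0 a a\<^sub>2 where g: "g = [:a\<^sub>0, a, a\<^sub>2:]" using degree2_coeffs[OF assms(2)] .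
  obtain b\<^sub>0 b b\<^sub>2 where h: "h = [:b\<^sub>0, b, b\<^sub>2:]" using degree2_coeffs[OF assms(3)] .
  have "g * h = [:a\<^sub>0 * b\<^sub>0, a\<^sub>0 * b + a * b\<^sub>0, a\<^sub>0 * b\<^sub>2 + a * b + a\<^sub>2 * b\<^sub>0,
                 a * b\<^sub>2 + a\<^sub>2 * b, a\<^sub>2 * b\<^sub>2:]"
    by (simp add: g h algebra_simps)
  then have "a\<^sub>0 * b\<^sub>0 = 1" "c\<^sub>1 = a\<^sub>0 * b + a * b\<^sub>0" "c\<^sub>2 = a\<^sub>0 * b\<^sub>2 + a * b + a\<^sub>2 * b\<^sub>0"
    "c\<^sub>3 = a * b\<^sub>2 + a\<^sub>2 * b" "a\<^sub>2 * b\<^sub>2 = 1"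
    using assms(1) by simp_all
  moreover from this have "a\<^sub>0 \<in> {1, -1}" "b\<^sub>0 = a\<^sub>0" "a\<^sub>2 \<in> {1, -1}" "b\<^sub>2 = a\<^sub>2"
    by (auto simp: zmult_eq_1_iff)
  ultimately show thesis
    by (intro that[of a\<^sub>0 a\<^sub>2 a b]) (auto simp: algebra_simps)
qed

lemma not_square_between_consecutive_squares:
  fixes x n m :: int
  assumes "0 \<le> n" "n\<^sup>2 < m" "m < (n + 1)\<^sup>2"
  shows "x\<^sup>2 \<noteq> m"
proof
  assume x: "x\<^sup>2 = m"
  have "n < \<bar>x\<bar>" using assms(1,2) x by (metis power2_abs power_less_imp_less_base abs_ge_zero)
  moreover have "\<bar>x\<bar> < n + 1" using assms(1,3) x by (metis power2_abs power_less_imp_less_base add_nonneg_nonneg zero_le_one)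
  ultimately show False by linarith
qed

definition F_int :: "int \<Rightarrow> int poly" where
  "F_int s = [: 1, 4, - 6 * s ^ 2 - 6, 4 * s ^ 3 - 4 * s ^ 2 + 8 * s - 4, 1 :]"

lemma of_int_poly_F_int: "of_int_poly (F_int s) = F s"
  by (simp add: F_def F_int_def)

lemma poly_F_int_one_nonzero: "poly (F_int s) 1 \<noteq> 0"
proof
  assume "poly (F_int s) 1 = 0"
  then have root: "4 * s ^ 3 - 10 * s ^ 2 + 8 * s - 4 = 0"
    by (simp add: F_int_def algebra_simps)
  then have "s * (2 * s\<^sup>2 - 5 * s + 4) = 2"
    by (simp add: algebra_simps power2_eq_square power3_eq_cube)
  then have "s dvd 2" by (metis dvd_triv_left)
  then have "\<bar>s\<bar> \<le> 2" using dvd_imp_le_int[of 2 s] by simp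
  then have "s \<in> {-2, -1, 0, 1, 2}" by auto
  then show False using root by auto
qed

lemma poly_F_int_minus_one_nonzero: "poly (F_int s) (-1) \<noteq> 0"
proof -
  have "poly (F_int s) (-1) = -2 * (2 * s + 1) * (s\<^sup>2 + 2)"
    by (simp add: F_int_def algebra_simps power2_eq_square power3_eq_cube)
  moreover have "2 * s + 1 \<noteq> 0" by presburger
  moreover have "s\<^sup>2 + 2 \<noteq> 0" by (smt (verit) zero_le_power2)
  ultimately show ?thesis by simp
qed

lemma F_int_cubic_coeff_eq_4_iff:
  fixes s :: int
  shows "4 * s ^ 3 - 4 * s ^ 2 + 8 * s - 4 = 4 \<longleftrightarrow> s = 1"
proof -
  have "4 * s ^ 3 - 4 * s ^ 2 + 8 * s - 4 - 4 = 4 * (s - 1) * (s\<^sup>2 + 2)"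
    by (simp add: algebra_simps power2_eq_square power3_eq_cube)
  moreover have "s\<^sup>2 + 2 \<noteq> 0" by (smt (verit) zero_le_power2)
  ultimately show ?thesis by (smt (verit) mult_eq_0_iff)
qed

lemma F_int_cubic_coeff_eq_minus_4_iff:
  fixes s :: int
  shows "4 * s ^ 3 - 4 * s ^ 2 + 8 * s - 4 = -4 \<longleftrightarrow> s = 0"
proof -
  have "4 * s ^ 3 - 4 * s ^ 2 + 8 * s - 4 + 4 = 4 * s * (s * (s - 1) + 2)"
    by (simp add: algebra_simps power2_eq_square power3_eq_cube)
  moreover have "s * (s - 1) \<ge> 0" by (smt (verit) mult_nonneg_nonneg mult_nonpos_nonpos)
  ultimately show ?thesis by (smt (verit) mult_eq_0_iff)
qed

lemma F_int_no_quadratic_factors: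
  assumes "F_int s = g * h" "degree g = 2" "degree h = 2"
  shows False
proof -
  obtain e f a b where ef: "e \<in> {1, -1}" "f \<in> {1, -1}" and sum: "a + b = e * 4"
    and c\<^sub>3: "4 * s ^ 3 - 4 * s ^ 2 + 8 * s - 4 = e * f * 4"
    and prod: "a * b = - 6 * s ^ 2 - 6 - 2 * e * f"
    using reciprocal_quartic_quadratic_factors assms unfolding F_int_def by metis
  have diff: "(a - b)\<^sup>2 = (a + b)\<^sup>2 - 4 * (a * b)" by (simp add: power2_eq_square algebra_simps)
  from ef consider "e * f = 1" | "e * f = -1" by auto
  then show False
  proof cases
    case 1
    then have "s = 1" using c\<^sub>3 F_int_cubic_coeff_eq_4_iff by simp
    then have "(a - b)\<^sup>2 = 72" using diff sum prod ef 1 by auto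
    then show False using not_square_between_consecutive_squares[of 8 72] by simp
  next
    case 2
    then have "s = 0" using c\<^sub>3 F_int_cubic_coeff_eq_minus_4_iff by simp
    then have "(a - b)\<^sup>2 = 32" using diff sum prod ef 2 by auto
    then show False using not_square_between_consecutive_squares[of 5 32] by simp
  qed
qed

lemma irreducible\<^sub>d_F_int: "irreducible\<^sub>d (F_int s)"
proof
  show deg: "0 < degree (F_int s)" by (simp add: F_int_def)
  fix g h assume "0 < degree g" "0 < degree h" and gh: "F_int s = g * h"
  have F: "lead_coeff (F_int s) = 1" "Polynomial.coeff (F_int s) 0 = 1" "degree (F_int s) = 4"
    by (simp_all add: F_int_def)
  have hg: "F_int s = h * g" using gh by (simp add: mult.commute)
  have no_linear: False if "F_int s = p * q" "degree p = 1" for p q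
    using linear_factor_imp_root_plus_minus_one[OF that F(1,2)]
      poly_F_int_one_nonzero poly_F_int_minus_one_nonzero by blast
  from degree_factors_of_quartic[of g h] \<open>0 < degree g\<close> \<open>0 < degree h\<close> F(3) gh
  show False using no_linear[OF gh] no_linear[OF hg] F_int_no_quadratic_factors[OF gh] by auto
qed

theorem mainTheorem4:
  fixes s :: int
  shows "irreducible (F s)"
  using irreducible\<^sub>d_int_rat[OF irreducible\<^sub>d_F_int[of s]] by (simp add: of_int_poly_F_int)

end
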